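(* Let $n\ge1$, $x>0$ and $0<v\le nx$. Suppose $y,z\ge0$ satisfy $y+z=x$ and $\lfloor n/2\rfloor\, y+\lceil n/2\rceil\, z\le v$. Let $\boldsymbol v_{yz}\in\mathbb{R}^n$ have $i$-th coordinate $z$ if $i$ is odd and $y$ if $i$ is even, and let $\boldsymbol v_r\in\mathbb{R}^n$ have nonnegative coordinates with $\sum_i v_{r,i}=v-\lfloor n/2\rfloor y-\lceil n/2\rceil z$ and $v_{yz,i}+v_{r,i}\le x$ for all $i$. Then $\boldsymbol v^*=\boldsymbol v_{yz}+\boldsymbol v_r$ minimizes $f$ over $\Lambda(v)$, and $\min_{\boldsymbol v\in\Lambda(v)}f(\boldsymbol v)=f(\boldsymbol v^* )=nx-v$.
   Context: For $w>0$, $\Lambda(w)$ is the set of vectors in $\mathbb{R}^n$ with nonnegative coordinates summing to $w$. For $\boldsymbol v=(v_1,\dots,v_n)$, $f(\boldsymbol v)\equiv\sum_{1\le l\le k\le n}\bigl(x-\sum_{i=l}^k v_i\bigr)^+$, where $a^+=\max\{a,0\}$. (Such $y,z$ exist e.g. whenever $v\ge\lfloor n/2\rfloor x$, taking $y=x$, $z=0$.) *)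

theory Defs
  imports Complex_Main
begin

text \<open>Vectors in R^n are represented as functions nat => real, indexed by 1..n;
  coordinates outside {1..n} are ignored.\<close>

definition Lambda :: "nat \<Rightarrow> real \<Rightarrow> (nat \<Rightarrow> real) set" where
  "Lambda n w = {v. (\<forall>i\<in>{1..n}. 0 \<le> v i) \<and> (\<Sum>i=1..n. v i) = w}"

definition fobj :: "nat \<Rightarrow> real \<Rightarrow> (nat \<Rightarrow> real) \<Rightarrow> real" where
  "fobj n x v = (\<Sum>k=1..n. \<Sum>l=1..k. max (x - (\<Sum>i=l..k. v i)) 0)"

end

theory Submission
  imports Defs
begin

text \<open>Every length-one window \<open>{k..k}\<close> contributes at least \<open>x - v k\<close> to \<open>f\<close>, so
  \<open>f(v) \<ge> \<Sum>k. (x - v k) = n x - v\<close> on \<open>\<Lambda>(v)\<close>. The vector \<open>v\<^sup>*\<close> attains this bound: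
  its coordinates are at most \<open>x\<close>, and any two neighbours sum to at least \<open>y + z = x\<close>,
  so every window of length at least two contributes nothing.\<close>

lemma sum_alternating:
  "(\<Sum>i=1..n. if odd i then z else y) = of_nat (n div 2) * y + of_nat ((n + 1) div 2) * (z :: 'a :: comm_semiring_1)"
proof (induction n)
  case (Suc n)
  then show ?case
    by (cases "even n") (auto elim!: evenE oddE simp: algebra_simps)
qed simp

lemma fobj_ge_sum_singletons: "(\<Sum>k=1..n. x - w k) \<le> fobj n x w"
  unfolding fobj_def
proof (rule sum_mono)
  fix k assume k: "k \<in> {1..n}"
  have "x - w k \<le> max (x - (\<Sum>i=k..k. w i)) 0" by simp
  also have "\<dots> \<le> (\<Sum>l=1..k. max (x - (\<Sum>i=l..k. w i)) 0)"
    by (rule member_le_sum) (use k in auto)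
  finally show "x - w k \<le> (\<Sum>l=1..k. max (x - (\<Sum>i=l..k. w i)) 0)" .
qed

lemma sum_Lambda_deficits:
  assumes "w \<in> Lambda n v"
  shows "(\<Sum>k=1..n. x - w k) = real n * x - v"
  using assms by (simp add: Lambda_def sum_subtractf)

lemma fobj_Lambda_lower_bound:
  assumes "w \<in> Lambda n v"
  shows "real n * x - v \<le> fobj n x w"
  using fobj_ge_sum_singletons[of x w n] sum_Lambda_deficits[OF assms] by simp

lemma window_sum_ge_neighbours:
  fixes u :: "nat \<Rightarrow> real"
  assumes "\<forall>i\<in>{1..n}. 0 \<le> u i" and "1 \<le> l" and "l < k" and "k \<le> n"
  shows "u l + u (Suc l) \<le> (\<Sum>i=l..k. u i)"
proof -
  have "u l + u (Suc l) = (\<Sum>i\<in>{l, Suc l}. u i)" by simp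
  also have "\<dots> \<le> (\<Sum>i=l..k. u i)"
    by (rule sum_mono2) (use assms in auto)
  finally show ?thesis .
qed

lemma fobj_eq_sum_singletons:
  fixes u :: "nat \<Rightarrow> real"
  assumes nonneg: "\<forall>i\<in>{1..n}. 0 \<le> u i"
    and le_x: "\<forall>i\<in>{1..n}. u i \<le> x"
    and neighbours: "\<forall>i. 1 \<le> i \<and> i < n \<longrightarrow> x \<le> u i + u (Suc i)"
  shows "fobj n x u = (\<Sum>k=1..n. x - u k)"
  unfolding fobj_def
proof (rule sum.cong)
  fix k assume k: "k \<in> {1..n}"
  have "max (x - (\<Sum>i=l..k. u i)) 0 = (if l = k then x - u k else 0)" if l: "l \<in> {1..k}" for l
  proof (cases "l = k")
    case True
    then show ?thesis using le_x k by simp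
  next
    case False
    with l have "l < k" by auto
    with l k have "x \<le> (\<Sum>i=l..k. u i)"
      using neighbours window_sum_ge_neighbours[OF nonneg, of l k] by fastforce
    with False show ?thesis by simp
  qed
  then have "(\<Sum>l=1..k. max (x - (\<Sum>i=l..k. u i)) 0) = (\<Sum>l=1..k. if l = k then x - u k else 0)"
    by (rule sum.cong[OF refl])
  also have "\<dots> = x - u k" using k by simp
  finally show "(\<Sum>l=1..k. max (x - (\<Sum>i=l..k. u i)) 0) = x - u k" .
qed simp

theorem mainTheorem4:
  fixes n :: nat and x v y z :: real and vr :: "nat \<Rightarrow> real"
  assumes "n \<ge> 1" and "x > 0" and "0 < v" and "v \<le> real n * x"
    and "y \<ge> 0" and "z \<ge> 0" and "y + z = x"
    and "real (n div 2) * y + real ((n + 1) div 2) * z \<le> v"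
    and "\<forall>i\<in>{1..n}. vr i \<ge> 0"
    and "(\<Sum>i=1..n. vr i) = v - real (n div 2) * y - real ((n + 1) div 2) * z"
    and "\<forall>i\<in>{1..n}. (if odd i then z else y) + vr i \<le> x"
  shows "(\<lambda>i. (if odd i then z else y) + vr i) \<in> Lambda n v
    \<and> (\<forall>w\<in>Lambda n v. fobj n x (\<lambda>i. (if odd i then z else y) + vr i) \<le> fobj n x w)
    \<and> fobj n x (\<lambda>i. (if odd i then z else y) + vr i) = real n * x - v"
proof -
  define u where "u = (\<lambda>i. (if odd i then z else y) + vr i)"
  have nonneg: "\<forall>i\<in>{1..n}. 0 \<le> u i" using assms(5,6,9) by (auto simp: u_def)
  have "(\<Sum>i=1..n. u i) = v"
    unfolding u_def sum.distrib sum_alternating using assms(10) by simp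
  with nonneg have mem: "u \<in> Lambda n v" by (simp add: Lambda_def)
  have "\<forall>i. 1 \<le> i \<and> i < n \<longrightarrow> x \<le> u i + u (Suc i)"
    using assms(7,9) by (auto simp: u_def)
  with nonneg assms(11) have "fobj n x u = real n * x - v"
    using fobj_eq_sum_singletons[of n u x] sum_Lambda_deficits[OF mem] by (simp add: u_def)
  with mem fobj_Lambda_lower_bound show ?thesis unfolding u_def by auto
qed

end
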